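(* For all integers $k\ge3$ and $n\ge k$ there exist a connected unweighted graph $G$ on $n$ vertices, $k$ singleton groups $R_1=\{r_1\},\dots,R_k=\{r_k\}$ and a source vertex $s$ such that every spanning subgraph $H$ of $G$ satisfying $\sigma_H(s,t)\le\alpha\,\sigma_G(s,t)$ for all $t\in V$ with some $\alpha<2-\frac{2}{k}$ has at least $n$ edges.
   Context: Unweighted means every edge has weight $1$. Paths are walks; lengths count edge weights with multiplicity. A group Steiner path from $s$ to $t$ is a path from $s$ to $t$ containing at least one vertex of each group $R_i$; $\sigma_X(s,t)$ is the minimum length of such a path in graph $X$ (with $s=t$ allowed). *)

theory Defs
  imports Main "HOL-Library.Extended_Nat"
begin

text \<open>An undirected simple graph on vertex set V is given by a set of edges,
each edge being a 2-element subset of V. All edges have weight 1.\<close>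

definition simple_graph :: "'a set \<Rightarrow> 'a set set \<Rightarrow> bool" where
  "simple_graph V E \<longleftrightarrow> (\<forall>e\<in>E. e \<subseteq> V \<and> card e = 2)"

text \<open>A walk (path in the paper's sense, repetitions allowed) is a nonempty vertex
list in V whose consecutive vertices are adjacent; its length is the number of edges.\<close>

definition is_walk :: "'a set \<Rightarrow> 'a set set \<Rightarrow> 'a list \<Rightarrow> bool" where
  "is_walk V E xs \<longleftrightarrow> xs \<noteq> [] \<and> set xs \<subseteq> V \<and>
     (\<forall>i. Suc i < length xs \<longrightarrow> {xs ! i, xs ! Suc i} \<in> E)"

definition walk_len :: "'a list \<Rightarrow> nat" where
  "walk_len xs = length xs - 1"

definition connected_graph :: "'a set \<Rightarrow> 'a set set \<Rightarrow> bool" where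
  "connected_graph V E \<longleftrightarrow>
     (\<forall>u\<in>V. \<forall>v\<in>V. \<exists>xs. is_walk V E xs \<and> hd xs = u \<and> last xs = v)"

definition group_steiner_walk ::
  "'a set \<Rightarrow> 'a set set \<Rightarrow> nat \<Rightarrow> (nat \<Rightarrow> 'a set) \<Rightarrow> 'a \<Rightarrow> 'a \<Rightarrow> 'a list \<Rightarrow> bool" where
  "group_steiner_walk V E k R s t xs \<longleftrightarrow>
     is_walk V E xs \<and> hd xs = s \<and> last xs = t \<and> (\<forall>i<k. set xs \<inter> R i \<noteq> {})"

text \<open>sigma: minimum length of a group Steiner path (infinity if none exists).\<close>

definition gs_dist ::
  "'a set \<Rightarrow> 'a set set \<Rightarrow> nat \<Rightarrow> (nat \<Rightarrow> 'a set) \<Rightarrow> 'a \<Rightarrow> 'a \<Rightarrow> enat" where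
  "gs_dist V E k R s t = Inf {enat (walk_len xs) | xs. group_steiner_walk V E k R s t xs}"

end

theory Submission imports Defs begin

text \<open>Take the cycle through the terminals \<open>0, \<dots>, k-1\<close> and attach every further
vertex as a pendant of the source \<open>0\<close>. The shortest group Steiner tour from \<open>0\<close> back to
\<open>0\<close> goes once around the cycle and has length \<open>k\<close>. A spanner must keep every pendant edge
to stay connected, and if it drops a cycle edge the remaining cycle is a path of length
\<open>k-1\<close> whose two ends must both be visited by a closed walk, which therefore has length at
least \<open>2k-2 = (2 - 2/k) k\<close>. Hence the only admissible spanner is the whole graph, which
has \<open>n\<close> edges.\<close>

lemma is_walk_snoc:
  assumes "is_walk V E xs" "{last xs, y} \<in> E" "y \<in> V"
  shows "is_walk V E (xs @ [y])"
  unfolding is_walk_def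
proof (intro conjI allI impI)
  show "xs @ [y] \<noteq> []" by simp
  show "set (xs @ [y]) \<subseteq> V" using assms unfolding is_walk_def by auto
  fix i assume i: "Suc i < length (xs @ [y])"
  show "{(xs @ [y]) ! i, (xs @ [y]) ! Suc i} \<in> E"
  proof (cases "Suc i < length xs")
    case True then show ?thesis using assms(1) unfolding is_walk_def by (auto simp: nth_append)
  next
    case False
    then have "i = length xs - 1" "xs \<noteq> []" using i assms(1) unfolding is_walk_def by auto
    then show ?thesis using assms(2) by (auto simp: nth_append last_conv_nth)
  qed
qed

lemma walk_from_rtrancl:
  assumes "(u, v) \<in> {(x, y). {x, y} \<in> E}\<^sup>*" "u \<in> V" "simple_graph V E"
  shows "\<exists>xs. is_walk V E xs \<and> hd xs = u \<and> last xs = v"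
  using assms(1)
proof (induction rule: rtrancl_induct)
  case base
  show ?case using assms(2) by (intro exI[of _ "[u]"]) (auto simp: is_walk_def)
next
  case (step y z)
  then obtain xs where xs: "is_walk V E xs" "hd xs = u" "last xs = y" by blast
  have yz: "{y, z} \<in> E" using step by simp
  then have "z \<in> V" using assms(3) unfolding simple_graph_def by auto
  then have "is_walk V E (xs @ [z])" using is_walk_snoc[OF xs(1)] xs(3) yz by simp
  moreover have "xs \<noteq> []" using xs(1) unfolding is_walk_def by simp
  ultimately show ?case using xs by (intro exI[of _ "xs @ [z]"]) auto
qed

lemma walk_last_edge:
  assumes "is_walk V E xs" "hd xs \<noteq> last xs"
  obtains u where "{u, last xs} \<in> E"
proof -
  have "length xs \<ge> 2"
    using assms by (cases xs rule: remdups_adj.cases) (auto simp: is_walk_def)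
  moreover have "xs \<noteq> []" using assms(1) unfolding is_walk_def by simp
  ultimately have "Suc (length xs - 2) < length xs" "xs ! Suc (length xs - 2) = last xs"
    by (auto simp: last_conv_nth Suc_diff_Suc numeral_2_eq_2)
  then show ?thesis using assms(1) that unfolding is_walk_def by metis
qed

lemma walk_lipschitz:
  fixes f :: "'a \<Rightarrow> int"
  assumes "is_walk V E xs" "\<And>x y. {x, y} \<in> E \<Longrightarrow> \<bar>f x - f y\<bar> \<le> 1"
    and "i \<le> j" "j < length xs"
  shows "\<bar>f (xs ! j) - f (xs ! i)\<bar> \<le> int (j - i)"
  using assms(3,4)
proof (induction j)
  case 0 then show ?case by simp
next
  case (Suc j)
  show ?case
  proof (cases "i = Suc j")
    case False
    then have ij: "i \<le> j" using Suc by simp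
    have "{xs ! j, xs ! Suc j} \<in> E" using assms(1) Suc.prems unfolding is_walk_def by auto
    then have "\<bar>f (xs ! j) - f (xs ! Suc j)\<bar> \<le> 1" using assms(2) by blast
    moreover have "\<bar>f (xs ! j) - f (xs ! i)\<bar> \<le> int (j - i)" using Suc ij by simp
    ultimately show ?thesis using ij by simp
  qed simp
qed

text \<open>Going from \<open>u\<close> to \<open>v\<close> and then back from \<open>v\<close> to \<open>u\<close> through the common
endpoint each costs at least \<open>\<bar>f u - f v\<bar>\<close>.\<close>

lemma closed_walk_len_lipschitz:
  fixes f :: "'a \<Rightarrow> int"
  assumes walk: "is_walk V E xs" and closed: "hd xs = last xs"
    and lip: "\<And>x y. {x, y} \<in> E \<Longrightarrow> \<bar>f x - f y\<bar> \<le> 1"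
    and "u \<in> set xs" "v \<in> set xs"
  shows "2 * \<bar>f u - f v\<bar> \<le> int (walk_len xs)"
proof -
  obtain p q where pq: "p < length xs" "xs ! p = u" "q < length xs" "xs ! q = v"
    using assms(4,5) by (metis in_set_conv_nth)
  define L where "L = length xs - 1"
  define lo where "lo = min p q"
  define hi where "hi = max p q"
  have ne: "xs \<noteq> []" using walk unfolding is_walk_def by simp
  have ends: "xs ! L = xs ! 0"
    using closed unfolding hd_conv_nth[OF ne] last_conv_nth[OF ne] L_def by simp
  have bounds: "lo \<le> hi" "hi \<le> L" "L < length xs"
    using pq ne unfolding lo_def hi_def L_def by auto
  note lipschitz = walk_lipschitz[where f = f, OF walk lip]
  have uv: "\<bar>f u - f v\<bar> = \<bar>f (xs ! hi) - f (xs ! lo)\<bar>"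
  proof (cases "p \<le> q")
    case False
    then have "\<bar>f (xs ! hi) - f (xs ! lo)\<bar> = \<bar>f v - f u\<bar>" using pq by (simp add: lo_def hi_def)
    then show ?thesis by (metis abs_minus_commute)
  qed (use pq in \<open>simp add: lo_def hi_def\<close>)
  have inner: "\<bar>f (xs ! hi) - f (xs ! lo)\<bar> \<le> int (hi - lo)"
    using lipschitz[of lo hi] bounds by simp
  have "\<bar>f (xs ! lo) - f (xs ! 0)\<bar> \<le> int lo" "\<bar>f (xs ! 0) - f (xs ! hi)\<bar> \<le> int (L - hi)"
    using lipschitz[of 0 lo] lipschitz[of hi L] bounds ends by simp_all
  then have outer: "\<bar>f (xs ! hi) - f (xs ! lo)\<bar> \<le> int lo + int (L - hi)" by linarith
  have "2 * \<bar>f u - f v\<bar> \<le> int (hi - lo) + (int lo + int (L - hi))"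
    unfolding uv mult_2 using add_mono[OF inner outer] .
  also have "\<dots> = int L" using bounds by simp
  finally show ?thesis by (simp add: walk_len_def L_def)
qed

lemma gs_dist_le_walk_len:
  assumes "group_steiner_walk V E k R s t xs"
  shows "gs_dist V E k R s t \<le> enat (walk_len xs)"
  unfolding gs_dist_def by (rule Inf_lower) (use assms in blast)

lemma gs_dist_ge:
  assumes "\<And>xs. group_steiner_walk V E k R s t xs \<Longrightarrow> m \<le> walk_len xs"
  shows "enat m \<le> gs_dist V E k R s t"
  unfolding gs_dist_def by (rule Inf_greatest) (use assms in auto)

lemma gs_dist_finiteE:
  assumes "gs_dist V E k R s t \<noteq> \<infinity>"
  obtains xs where "group_steiner_walk V E k R s t xs"
  using assms unfolding gs_dist_def by (auto simp: top_enat_def[symmetric])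

definition pendant_cycle_edge :: "nat \<Rightarrow> nat \<Rightarrow> nat set" where
  "pendant_cycle_edge k i = (if i < k then {i, Suc i mod k} else {0, i})"

definition pendant_cycle :: "nat \<Rightarrow> nat \<Rightarrow> nat set set" where
  "pendant_cycle k n = pendant_cycle_edge k ` {..<n}"

lemma Suc_mod_eq: "i < k \<Longrightarrow> Suc i mod k = (if Suc i = k then 0 else Suc i)"
  by auto

lemma pendant_cycle_simple:
  assumes "3 \<le> k" "k \<le> n"
  shows "simple_graph {..<n} (pendant_cycle k n)"
  unfolding simple_graph_def pendant_cycle_def
proof
  fix e assume "e \<in> pendant_cycle_edge k ` {..<n}"
  then obtain i where i: "i < n" "e = pendant_cycle_edge k i" by auto
  show "e \<subseteq> {..<n} \<and> card e = 2"
  proof (cases "i < k")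
    case True
    then have "Suc i mod k = (if Suc i = k then 0 else Suc i)" by (rule Suc_mod_eq)
    then have "Suc i mod k \<noteq> i" "Suc i mod k < n" using assms True by auto
    then show ?thesis using i True unfolding pendant_cycle_edge_def by auto
  next
    case False then show ?thesis using i assms unfolding pendant_cycle_edge_def by auto
  qed
qed

lemma pendant_cycle_edge_inj:
  assumes "3 \<le> k"
  shows "inj_on (pendant_cycle_edge k) {..<n}"
proof (rule inj_onI)
  fix i j assume eq: "pendant_cycle_edge k i = pendant_cycle_edge k j"
  have cyc: "pendant_cycle_edge k i \<subseteq> {..<k}" if "i < k" for i
    using that assms unfolding pendant_cycle_edge_def by auto
  consider "i < k" "j < k" | "i < k" "\<not> j < k" | "\<not> i < k" "j < k" | "\<not> i < k" "\<not> j < k"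
    by blast
  then show "i = j"
  proof cases
    case 1
    then have "{i, if Suc i = k then 0 else Suc i} = {j, if Suc j = k then 0 else Suc j}"
      using eq unfolding pendant_cycle_edge_def by (simp add: Suc_mod_eq)
    then show ?thesis using assms 1 by (auto simp: doubleton_eq_iff split: if_splits)
  next
    case 2
    then show ?thesis using eq cyc[of i] unfolding pendant_cycle_edge_def by auto
  next
    case 3
    then show ?thesis using eq cyc[of j] unfolding pendant_cycle_edge_def by auto
  next
    case 4
    then show ?thesis using eq assms unfolding pendant_cycle_edge_def by (auto simp: doubleton_eq_iff)
  qed
qed

lemma card_pendant_cycle:
  assumes "3 \<le> k"
  shows "card (pendant_cycle k n) = n"
  unfolding pendant_cycle_def using card_image[OF pendant_cycle_edge_inj[OF assms]] by simp

lemma pendant_cycle_connected: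
  assumes "3 \<le> k" "k \<le> n"
  shows "connected_graph {..<n} (pendant_cycle k n)"
proof -
  let ?E = "pendant_cycle k n"
  let ?R = "{(x, y). {x, y} \<in> ?E}"
  have sym: "(x, y) \<in> ?R \<Longrightarrow> (y, x) \<in> ?R" for x y by (simp add: insert_commute)
  then have converse_R: "?R\<inverse> = ?R" by auto
  have along_cycle: "(0, u) \<in> ?R\<^sup>*" if "u < k" for u
    using that
  proof (induction u)
    case (Suc u)
    have "pendant_cycle_edge k u = {u, Suc u}" "u < n"
      using Suc.prems assms unfolding pendant_cycle_edge_def by auto
    then have "(u, Suc u) \<in> ?R" unfolding pendant_cycle_def by force
    with Suc show ?case by (meson Suc_lessD rtrancl.rtrancl_into_rtrancl)
  qed simp
  have from_source: "(0, u) \<in> ?R\<^sup>*" if "u < n" for u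
  proof (cases "u < k")
    case False
    then have "{0, u} \<in> ?E" using that unfolding pendant_cycle_def pendant_cycle_edge_def by force
    then show ?thesis by auto
  qed (use along_cycle in blast)
  show ?thesis unfolding connected_graph_def
  proof (intro ballI)
    fix u v assume u: "u \<in> {..<n}" and v: "v \<in> {..<n}"
    have "(u, 0) \<in> (?R\<inverse>)\<^sup>*" using from_source u by (simp add: rtrancl_converse)
    then have "(u, 0) \<in> ?R\<^sup>*" unfolding converse_R .
    moreover have "(0, v) \<in> ?R\<^sup>*" using from_source v by simp
    ultimately have "(u, v) \<in> ?R\<^sup>*" by (rule rtrancl_trans)
    then show "\<exists>xs. is_walk {..<n} ?E xs \<and> hd xs = u \<and> last xs = v"
      using walk_from_rtrancl[OF _ u pendant_cycle_simple[OF assms]] by blast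
  qed
qed

lemma pendant_cycle_tour:
  assumes "3 \<le> k" "k \<le> n"
  shows "gs_dist {..<n} (pendant_cycle k n) k (\<lambda>i. {i}) 0 0 \<le> enat k"
proof -
  let ?W = "[0..<k] @ [0]"
  have "is_walk {..<n} (pendant_cycle k n) ?W"
    unfolding is_walk_def
  proof (intro conjI allI impI)
    show "set ?W \<subseteq> {..<n}" using assms by auto
    fix i assume i: "Suc i < length ?W"
    then have "{?W ! i, ?W ! Suc i} = pendant_cycle_edge k i" "i < n"
      using assms unfolding pendant_cycle_edge_def by (auto simp: nth_append Suc_mod_eq)
    then show "{?W ! i, ?W ! Suc i} \<in> pendant_cycle k n" unfolding pendant_cycle_def by simp
  qed simp
  then have "group_steiner_walk {..<n} (pendant_cycle k n) k (\<lambda>i. {i}) 0 0 ?W"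
    unfolding group_steiner_walk_def using assms by auto
  from gs_dist_le_walk_len[OF this] show ?thesis by (simp add: walk_len_def)
qed

lemma pendant_edge_needed:
  assumes "H \<subseteq> pendant_cycle k n" "gs_dist {..<n} H k R 0 i \<noteq> \<infinity>" "k \<le> i" "0 < k"
  shows "pendant_cycle_edge k i \<in> H"
proof -
  obtain xs where "group_steiner_walk {..<n} H k R 0 i xs"
    using gs_dist_finiteE[OF assms(2)] .
  then have walk: "is_walk {..<n} H xs" "hd xs \<noteq> last xs" "last xs = i"
    using assms(3,4) unfolding group_steiner_walk_def by auto
  then obtain u where "{u, i} \<in> H" by (metis walk_last_edge)
  then obtain j where j: "{u, i} = pendant_cycle_edge k j" "{u, i} \<in> H"
    using assms(1) unfolding pendant_cycle_def by auto
  have "j = i"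
  proof (cases "j < k")
    case True
    then have "i \<in> {j, Suc j mod k}" using j unfolding pendant_cycle_edge_def by auto
    moreover have "Suc j mod k < k" using assms(4) by simp
    ultimately show ?thesis using True assms(3) by auto
  next
    case False
    then have "i \<in> {0, j}" using j unfolding pendant_cycle_edge_def by auto
    with assms(3,4) show ?thesis by auto
  qed
  with j show ?thesis by simp
qed

text \<open>The potential \<open>(v - a - 1) mod k\<close> on the cycle, extended to the pendants by its
value at \<open>0\<close>, changes by at most one along every edge except \<open>{a, a+1}\<close>, where it jumps
from \<open>k-1\<close> to \<open>0\<close>.\<close>

lemma tour_without_cycle_edge:
  assumes "3 \<le> k" "H \<subseteq> pendant_cycle k n" "a < k" "pendant_cycle_edge k a \<notin> H"
    and tour: "group_steiner_walk {..<n} H k (\<lambda>i. {i}) 0 0 xs"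
  shows "2 * k - 2 \<le> walk_len xs"
proof -
  define f :: "nat \<Rightarrow> int" where
    "f v = (if v < k then (if a < v then int v - a - 1 else int v + k - a - 1) else int k - a - 1)" for v
  have lip: "\<bar>f x - f y\<bar> \<le> 1" if xy: "{x, y} \<in> H" for x y
  proof -
    obtain j where "{x, y} = pendant_cycle_edge k j"
      using xy assms(2) unfolding pendant_cycle_def by auto
    moreover from this xy assms(4) have "j \<noteq> a" by auto
    ultimately have j: "{x, y} = pendant_cycle_edge k j" "j \<noteq> a" .
    show ?thesis
    proof (cases "j < k")
      case True
      then have "{x, y} = {j, if Suc j = k then 0 else Suc j}"
        using j unfolding pendant_cycle_edge_def by (simp add: Suc_mod_eq)
      moreover have "\<bar>f j - f (if Suc j = k then 0 else Suc j)\<bar> \<le> 1"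
        using True j(2) assms(3) unfolding f_def by auto
      ultimately show ?thesis by (metis abs_minus_commute doubleton_eq_iff)
    next
      case False
      then have "{x, y} = {0, j}" using j unfolding pendant_cycle_edge_def by simp
      then show ?thesis using False assms unfolding f_def by (auto simp: doubleton_eq_iff)
    qed
  qed
  have "Suc a mod k < k" using assms(3) by simp
  then have visits: "is_walk {..<n} H xs" "hd xs = last xs" "a \<in> set xs" "Suc a mod k \<in> set xs"
    using tour assms(3) unfolding group_steiner_walk_def by auto
  have "f a - f (Suc a mod k) = int k - 1"
    using assms(1,3) unfolding f_def by (auto simp: Suc_mod_eq)
  moreover have "2 * \<bar>f a - f (Suc a mod k)\<bar> \<le> int (walk_len xs)"
    by (rule closed_walk_len_lipschitz[OF visits(1,2) _ visits(3,4)]) (rule lip)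
  ultimately have "2 * int k - 2 \<le> int (walk_len xs)" using assms(1) by simp
  then show ?thesis by linarith
qed

lemma cycle_edge_needed:
  fixes \<alpha> :: real
  assumes "3 \<le> k" "k \<le> n" "H \<subseteq> pendant_cycle k n" "a < k" "\<alpha> < 2 - 2 / real k"
    and finite: "gs_dist {..<n} H k (\<lambda>i. {i}) 0 0 \<noteq> \<infinity>"
    and stretch: "real (the_enat (gs_dist {..<n} H k (\<lambda>i. {i}) 0 0))
       \<le> \<alpha> * real (the_enat (gs_dist {..<n} (pendant_cycle k n) k (\<lambda>i. {i}) 0 0))"
  shows "pendant_cycle_edge k a \<in> H"
proof (rule ccontr)
  assume "pendant_cycle_edge k a \<notin> H"
  then have "enat (2 * k - 2) \<le> gs_dist {..<n} H k (\<lambda>i. {i}) 0 0"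
    using tour_without_cycle_edge assms(1,3,4) by (blast intro: gs_dist_ge)
  with finite obtain h where h: "gs_dist {..<n} H k (\<lambda>i. {i}) 0 0 = enat h" "2 * k - 2 \<le> h"
    by (cases "gs_dist {..<n} H k (\<lambda>i. {i}) 0 0") auto
  obtain g where g: "gs_dist {..<n} (pendant_cycle k n) k (\<lambda>i. {i}) 0 0 = enat g" "g \<le> k"
    using pendant_cycle_tour[OF assms(1,2)] by (cases "gs_dist {..<n} (pendant_cycle k n) k (\<lambda>i. {i}) 0 0") auto
  have "\<alpha> * real g < 2 * real k - 2"
  proof (cases "\<alpha> \<le> 0")
    case True
    then have "\<alpha> * real g \<le> 0" by (simp add: mult_nonpos_nonneg)
    then show ?thesis using assms(1) by simp
  next
    case False
    then have "\<alpha> * real g \<le> \<alpha> * real k" using g by simp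
    also have "\<dots> < (2 - 2 / real k) * real k" using assms(1,5) by simp
    also have "\<dots> = 2 * real k - 2" using assms(1) by (simp add: field_simps)
    finally show ?thesis .
  qed
  with stretch h g assms(1) show False by simp
qed

lemma pendant_cycle_spanner_complete:
  fixes \<alpha> :: real
  assumes "3 \<le> k" "k \<le> n" and sub: "H \<subseteq> pendant_cycle k n" and \<alpha>: "\<alpha> < 2 - 2 / real k"
    and spanner: "\<forall>t\<in>{..<n}. gs_dist {..<n} H k (\<lambda>i. {i}) 0 t \<noteq> \<infinity> \<and>
       real (the_enat (gs_dist {..<n} H k (\<lambda>i. {i}) 0 t))
         \<le> \<alpha> * real (the_enat (gs_dist {..<n} (pendant_cycle k n) k (\<lambda>i. {i}) 0 t))"
  shows "H = pendant_cycle k n"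
proof -
  have "pendant_cycle_edge k i \<in> H" if "i < n" for i
  proof (cases "i < k")
    case True
    with spanner cycle_edge_needed[OF _ _ sub _ \<alpha>] assms(1,2) show ?thesis by auto
  next
    case False
    with spanner pendant_edge_needed[OF sub, where R = "\<lambda>i. {i}"] assms(1) that show ?thesis by auto
  qed
  with sub show ?thesis unfolding pendant_cycle_def by blast
qed

theorem mainTheorem12:
  fixes k n :: nat
  assumes "k \<ge> 3" and "n \<ge> k"
  shows "\<exists>(E :: nat set set) (r :: nat \<Rightarrow> nat) (s :: nat).
     simple_graph {..<n} E \<and> connected_graph {..<n} E \<and>
     (\<forall>i<k. r i \<in> {..<n}) \<and> s \<in> {..<n} \<and>
     (\<forall>H (\<alpha> :: real). H \<subseteq> E \<and> \<alpha> < 2 - 2 / real k \<and>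
        (\<forall>t\<in>{..<n}. gs_dist {..<n} H k (\<lambda>i. {r i}) s t \<noteq> \<infinity> \<and>
            real (the_enat (gs_dist {..<n} H k (\<lambda>i. {r i}) s t))
              \<le> \<alpha> * real (the_enat (gs_dist {..<n} E k (\<lambda>i. {r i}) s t)))
        \<longrightarrow> card H \<ge> n)"
proof (intro exI[of _ "pendant_cycle k n"] exI[of _ "\<lambda>i. i"] exI[of _ 0] conjI allI impI)
  show "simple_graph {..<n} (pendant_cycle k n)" "connected_graph {..<n} (pendant_cycle k n)"
    using pendant_cycle_simple pendant_cycle_connected assms by auto
  show "i \<in> {..<n}" if "i < k" for i using that assms by simp
  show "0 \<in> {..<n}" using assms by simp
  fix H and \<alpha> :: real
  assume "H \<subseteq> pendant_cycle k n \<and> \<alpha> < 2 - 2 / real k \<and>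
    (\<forall>t\<in>{..<n}. gs_dist {..<n} H k (\<lambda>i. {i}) 0 t \<noteq> \<infinity> \<and>
       real (the_enat (gs_dist {..<n} H k (\<lambda>i. {i}) 0 t))
         \<le> \<alpha> * real (the_enat (gs_dist {..<n} (pendant_cycle k n) k (\<lambda>i. {i}) 0 t)))"
  then have "H = pendant_cycle k n" using pendant_cycle_spanner_complete assms by blast
  then show "n \<le> card H" using card_pendant_cycle assms by simp
qed

end
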